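(* Let ${}^*\mathbb{Z}=\mathbb{Z}^I/\mathcal{U}$ be an ultrapower of $\mathbb{Z}$ with respect to a nonprincipal ultrafilter $\mathcal{U}$ on a countably infinite set $I$, and let $\mathfrak{m}$ be a maximal ideal of ${}^*\mathbb{Z}$, with $\nu_{\mathfrak{m}}$ and $S_{\mathfrak{m}}$ as in the context. Then $P\mapsto\nu_{\mathfrak{m}}\big((P\,{}^*\mathbb{Z}_{\mathfrak{m}})\setminus\{0\}\big)$ is a one-to-one correspondence between the prime ideals $P$ of ${}^*\mathbb{Z}$ contained in $\mathfrak{m}$ and the proper radical subsemigroups of $S_{\mathfrak{m}}$ without right-end-point.
   Context: It is known (Olberding–Saydam) that the localization ${}^*\mathbb{Z}_{\mathfrak{m}}$ is a valuation domain; let $\nu_{\mathfrak{m}}$ be its valuation, with values in a totally ordered abelian group written multiplicatively, $\nu_{\mathfrak{m}}(a)\le\nu_{\mathfrak{m}}(b)$ iff $b/a\in{}^*\mathbb{Z}_{\mathfrak{m}}$, and $S_{\mathfrak{m}}=\nu_{\mathfrak{m}}({}^*\mathbb{Z}_{\mathfrak{m}}\setminus\{0\})$ as an ordered semigroup. A subsemigroup $T\subseteq S_{\mathfrak{m}}$ (a subset closed under multiplication) is proper if $T\neq S_{\mathfrak{m}}$; convex if $t_1<s<t_2$ with $t_1,t_2\in T$ implies $s\in T$; radical if whenever $x\in T$, $n>0$, $y\in S_{\mathfrak{m}}$, $y^n=x$, then $y\in T$; and without right-end-point if it is convex and $x\in T$, $y\in S_{\mathfrak{m}}$, $x<y$ imply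 $y\in T$. *)

theory Defs
  imports "HOL-Algebra.QuotRing" "HOL-Library.Countable_Set"
begin

definition nonprincipal_ultrafilter :: "'i set set \<Rightarrow> bool" where
  "nonprincipal_ultrafilter U \<longleftrightarrow>
     UNIV \<in> U \<and> {} \<notin> U \<and>
     (\<forall>A B. A \<in> U \<longrightarrow> B \<in> U \<longrightarrow> A \<inter> B \<in> U) \<and>
     (\<forall>A B. A \<in> U \<longrightarrow> A \<subseteq> B \<longrightarrow> B \<in> U) \<and>
     (\<forall>A. A \<in> U \<or> - A \<in> U) \<and>
     (\<forall>x. {x} \<notin> U)"

definition ZI :: "('i \<Rightarrow> int) ring" where
  "ZI = \<lparr>carrier = UNIV, monoid.mult = (\<lambda>f g i. f i * g i), one = (\<lambda>i. 1),
         zero = (\<lambda>i. 0), add = (\<lambda>f g i. f i + g i)\<rparr>"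

definition null_ideal :: "'i set set \<Rightarrow> ('i \<Rightarrow> int) set" where
  "null_ideal U = {f. {i. f i = 0} \<in> U}"

definition starZ :: "'i set set \<Rightarrow> ('i \<Rightarrow> int) set ring" where
  "starZ U = ZI Quot null_ideal U"

text \<open>Localization R_m of a (commutative, integral) ring R at a prime m, represented by
  fractions a/s given as pairs (a,s) with s \<notin> m.\<close>
definition loc :: "('a, 'b) ring_scheme \<Rightarrow> 'a set \<Rightarrow> ('a \<times> 'a) set" where
  "loc R m = {(a, s). a \<in> carrier R \<and> s \<in> carrier R \<and> s \<notin> m}"

definition loc_nz :: "('a, 'b) ring_scheme \<Rightarrow> 'a set \<Rightarrow> ('a \<times> 'a) set" where
  "loc_nz R m = {x \<in> loc R m. fst x \<noteq> \<zero>\<^bsub>R\<^esub>}"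

definition loc_mult :: "('a, 'b) ring_scheme \<Rightarrow> 'a \<times> 'a \<Rightarrow> 'a \<times> 'a \<Rightarrow> 'a \<times> 'a" where
  "loc_mult R x y = (fst x \<otimes>\<^bsub>R\<^esub> fst y, snd x \<otimes>\<^bsub>R\<^esub> snd y)"

text \<open>x divides y in R_m, i.e. y/x \<in> R_m: y = x * (c/u) for some c/u \<in> R_m.\<close>
definition loc_dvd :: "('a, 'b) ring_scheme \<Rightarrow> 'a set \<Rightarrow> 'a \<times> 'a \<Rightarrow> 'a \<times> 'a \<Rightarrow> bool" where
  "loc_dvd R m x y \<longleftrightarrow> (\<exists>c u. (c, u) \<in> loc R m \<and>
      fst y \<otimes>\<^bsub>R\<^esub> snd x \<otimes>\<^bsub>R\<^esub> u = fst x \<otimes>\<^bsub>R\<^esub> c \<otimes>\<^bsub>R\<^esub> snd y)"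

text \<open>The valuation \<nu>_m of the valuation domain R_m: the value of x is its class of
  associates in R_m (nonzero elements).\<close>
definition val :: "('a, 'b) ring_scheme \<Rightarrow> 'a set \<Rightarrow> 'a \<times> 'a \<Rightarrow> ('a \<times> 'a) set" where
  "val R m x = {y \<in> loc_nz R m. loc_dvd R m x y \<and> loc_dvd R m y x}"

definition value_sg :: "('a, 'b) ring_scheme \<Rightarrow> 'a set \<Rightarrow> ('a \<times> 'a) set set" where
  "value_sg R m = val R m ` loc_nz R m"

definition val_le :: "('a, 'b) ring_scheme \<Rightarrow> 'a set \<Rightarrow> ('a \<times> 'a) set \<Rightarrow> ('a \<times> 'a) set \<Rightarrow> bool" where
  "val_le R m A B \<longleftrightarrow> (\<exists>x \<in> loc_nz R m. \<exists>y \<in> loc_nz R m.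
      A = val R m x \<and> B = val R m y \<and> loc_dvd R m x y)"

definition val_less :: "('a, 'b) ring_scheme \<Rightarrow> 'a set \<Rightarrow> ('a \<times> 'a) set \<Rightarrow> ('a \<times> 'a) set \<Rightarrow> bool" where
  "val_less R m A B \<longleftrightarrow> val_le R m A B \<and> A \<noteq> B"

definition val_mult :: "('a, 'b) ring_scheme \<Rightarrow> 'a set \<Rightarrow> ('a \<times> 'a) set \<Rightarrow> ('a \<times> 'a) set \<Rightarrow> ('a \<times> 'a) set" where
  "val_mult R m A B = (THE C. \<exists>x \<in> loc_nz R m. \<exists>y \<in> loc_nz R m.
      A = val R m x \<and> B = val R m y \<and> C = val R m (loc_mult R x y))"

fun val_pow :: "('a, 'b) ring_scheme \<Rightarrow> 'a set \<Rightarrow> ('a \<times> 'a) set \<Rightarrow> nat \<Rightarrow> ('a \<times> 'a) set" where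
  "val_pow R m A 0 = val R m (\<one>\<^bsub>R\<^esub>, \<one>\<^bsub>R\<^esub>)"
| "val_pow R m A (Suc n) = val_mult R m A (val_pow R m A n)"

definition is_subsemigroup :: "('a, 'b) ring_scheme \<Rightarrow> 'a set \<Rightarrow> ('a \<times> 'a) set set \<Rightarrow> bool" where
  "is_subsemigroup R m T \<longleftrightarrow> T \<subseteq> value_sg R m \<and>
     (\<forall>x \<in> T. \<forall>y \<in> T. val_mult R m x y \<in> T)"

definition is_convex :: "('a, 'b) ring_scheme \<Rightarrow> 'a set \<Rightarrow> ('a \<times> 'a) set set \<Rightarrow> bool" where
  "is_convex R m T \<longleftrightarrow> (\<forall>t1 \<in> T. \<forall>t2 \<in> T. \<forall>s \<in> value_sg R m.
     val_less R m t1 s \<longrightarrow> val_less R m s t2 \<longrightarrow> s \<in> T)"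

definition is_radical :: "('a, 'b) ring_scheme \<Rightarrow> 'a set \<Rightarrow> ('a \<times> 'a) set set \<Rightarrow> bool" where
  "is_radical R m T \<longleftrightarrow> (\<forall>x \<in> T. \<forall>n::nat. \<forall>y \<in> value_sg R m.
     n > 0 \<longrightarrow> val_pow R m y n = x \<longrightarrow> y \<in> T)"

definition without_right_end_point :: "('a, 'b) ring_scheme \<Rightarrow> 'a set \<Rightarrow> ('a \<times> 'a) set set \<Rightarrow> bool" where
  "without_right_end_point R m T \<longleftrightarrow> is_convex R m T \<and>
     (\<forall>x \<in> T. \<forall>y \<in> value_sg R m. val_less R m x y \<longrightarrow> y \<in> T)"

text \<open>\<nu>_m((P R_m) \ {0}): the extended ideal P R_m consists of the fractions p/s, p \<in> P.\<close>
definition ext_val :: "('a, 'b) ring_scheme \<Rightarrow> 'a set \<Rightarrow> 'a set \<Rightarrow> ('a \<times> 'a) set set" where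
  "ext_val R m P = val R m ` {x \<in> loc_nz R m. fst x \<in> P}"

end

theory Submission imports Defs begin

text \<open>
  The argument only uses that \<open>R\<^sub>m\<close> is a valuation domain. A prime \<open>P \<subseteq> m\<close> is recovered
  from its value set \<open>T\<close> as the contraction \<open>{a. \<nu>(a) \<in> T} \<union> {0}\<close>: that \<open>T\<close> is closed upwards
  makes the contraction an ideal (in a valuation domain \<open>a + b\<close> is a multiple of \<open>a\<close> or of
  \<open>b\<close>), and radicality makes it prime, because \<open>ab\<close> divides \<open>a\<^sup>2\<close> or \<open>b\<^sup>2\<close>. Conversely the
  value set of a prime is an upward closed radical semigroup. That \<open>\<^sup>*\<int>\<^sub>m\<close> is a valuation
  domain follows from \<open>\<^sup>*\<int>\<close> being a Bezout-like ring: any two elements are proportional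
  to a comaximal pair, as holds coordinatewise in \<open>\<int>\<close>.
\<close>

fun loc_pow :: "('a, 'b) ring_scheme \<Rightarrow> 'a \<times> 'a \<Rightarrow> nat \<Rightarrow> 'a \<times> 'a" where
  "loc_pow R x 0 = (\<one>\<^bsub>R\<^esub>, \<one>\<^bsub>R\<^esub>)"
| "loc_pow R x (Suc n) = loc_mult R x (loc_pow R x n)"

text \<open>The assumption says that \<open>R\<^sub>m\<close> is a valuation ring: of two elements of \<open>R\<close>, one
  divides the other in \<open>R\<^sub>m\<close>.\<close>

locale valuation_localization = domain R + M: primeideal m R for R (structure) and m +
  assumes comparable: "\<And>a b. a \<in> carrier R \<Longrightarrow> b \<in> carrier R \<Longrightarrow>
     (\<exists>c u. c \<in> carrier R \<and> u \<in> carrier R \<and> u \<notin> m \<and> b \<otimes> u = a \<otimes> c) \<or>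
     (\<exists>c u. c \<in> carrier R \<and> u \<in> carrier R \<and> u \<notin> m \<and> a \<otimes> u = b \<otimes> c)"
begin

subsection \<open>Fractions and divisibility in the localization\<close>

lemma loc_iff: "x \<in> loc R m \<longleftrightarrow> fst x \<in> carrier R \<and> snd x \<in> carrier R \<and> snd x \<notin> m"
  by (cases x) (auto simp: loc_def)

lemma loc_nz_iff:
  "x \<in> loc_nz R m \<longleftrightarrow> fst x \<in> carrier R \<and> snd x \<in> carrier R \<and> snd x \<notin> m \<and> fst x \<noteq> \<zero>"
  by (auto simp: loc_nz_def loc_iff)

lemma loc_nz_imp_loc: "x \<in> loc_nz R m \<Longrightarrow> x \<in> loc R m"
  by (simp add: loc_nz_def)

lemma not_in_m_nonzero: "s \<notin> m \<Longrightarrow> s \<noteq> \<zero>"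
  using M.additive_subgroup_axioms additive_subgroup.zero_closed by blast

lemma one_not_in_m: "\<one> \<notin> m"
  using M.I_notcarr M.one_imp_carrier by blast

lemma mult_not_in_m: "s \<in> carrier R \<Longrightarrow> t \<in> carrier R \<Longrightarrow> s \<notin> m \<Longrightarrow> t \<notin> m \<Longrightarrow> s \<otimes> t \<notin> m"
  using M.I_prime by blast

lemma one_loc_nz: "(\<one>, \<one>) \<in> loc_nz R m"
  by (simp add: loc_nz_iff one_not_in_m)

lemma loc_mult_nz: "x \<in> loc_nz R m \<Longrightarrow> y \<in> loc_nz R m \<Longrightarrow> loc_mult R x y \<in> loc_nz R m"
  by (auto simp: loc_nz_iff loc_mult_def integral_iff mult_not_in_m)

lemma loc_pow_nz: "x \<in> loc_nz R m \<Longrightarrow> loc_pow R x n \<in> loc_nz R m"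
  by (induction n) (auto simp: one_loc_nz loc_mult_nz)

lemma loc_dvd_refl: "x \<in> loc R m \<Longrightarrow> loc_dvd R m x x"
  unfolding loc_dvd_def loc_iff
  by (rule exI[of _ \<one>], rule exI[of _ \<one>]) (auto simp: loc_def one_not_in_m m_ac)

lemma loc_dvd_trans:
  assumes x: "x \<in> loc R m" and y: "y \<in> loc R m" and z: "z \<in> loc R m"
    and xy: "loc_dvd R m x y" and yz: "loc_dvd R m y z"
  shows "loc_dvd R m x z"
proof -
  obtain c u where cu: "(c, u) \<in> loc R m" and E1: "fst y \<otimes> snd x \<otimes> u = fst x \<otimes> c \<otimes> snd y"
    using xy unfolding loc_dvd_def by blast
  obtain d v where dv: "(d, v) \<in> loc R m" and E2: "fst z \<otimes> snd y \<otimes> v = fst y \<otimes> d \<otimes> snd z"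
    using yz unfolding loc_dvd_def by blast
  have C: "fst x \<in> carrier R" "snd x \<in> carrier R" "fst y \<in> carrier R" "snd y \<in> carrier R"
    "fst z \<in> carrier R" "snd z \<in> carrier R" "c \<in> carrier R" "u \<in> carrier R"
    "d \<in> carrier R" "v \<in> carrier R" "snd y \<noteq> \<zero>" "u \<notin> m" "v \<notin> m"
    using x y z cu dv not_in_m_nonzero by (auto simp: loc_iff)
  have "(fst z \<otimes> snd x \<otimes> (u \<otimes> v)) \<otimes> snd y = (snd x \<otimes> u) \<otimes> (fst z \<otimes> snd y \<otimes> v)"
    using C by (simp add: m_ac)
  also have "\<dots> = (snd x \<otimes> u) \<otimes> (fst y \<otimes> d \<otimes> snd z)" by (simp add: E2)
  also have "\<dots> = (d \<otimes> snd z) \<otimes> (fst y \<otimes> snd x \<otimes> u)" using C by (simp add: m_ac)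
  also have "\<dots> = (d \<otimes> snd z) \<otimes> (fst x \<otimes> c \<otimes> snd y)" by (simp add: E1)
  also have "\<dots> = (fst x \<otimes> (c \<otimes> d) \<otimes> snd z) \<otimes> snd y" using C by (simp add: m_ac)
  finally have "fst z \<otimes> snd x \<otimes> (u \<otimes> v) = fst x \<otimes> (c \<otimes> d) \<otimes> snd z"
    using C m_rcancel by simp
  moreover have "(c \<otimes> d, u \<otimes> v) \<in> loc R m"
    using C mult_not_in_m by (auto simp: loc_def)
  ultimately show ?thesis unfolding loc_dvd_def by blast
qed

lemma loc_dvd_loc_mult:
  assumes "x \<in> loc R m" "x' \<in> loc R m" "y \<in> loc R m" "y' \<in> loc R m"
    and xx': "loc_dvd R m x x'" and yy': "loc_dvd R m y y'"
  shows "loc_dvd R m (loc_mult R x y) (loc_mult R x' y')"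
proof -
  obtain c u where cu: "(c, u) \<in> loc R m" and E1: "fst x' \<otimes> snd x \<otimes> u = fst x \<otimes> c \<otimes> snd x'"
    using xx' unfolding loc_dvd_def by blast
  obtain d v where dv: "(d, v) \<in> loc R m" and E2: "fst y' \<otimes> snd y \<otimes> v = fst y \<otimes> d \<otimes> snd y'"
    using yy' unfolding loc_dvd_def by blast
  have C: "fst x \<in> carrier R" "snd x \<in> carrier R" "fst y \<in> carrier R" "snd y \<in> carrier R"
    "fst x' \<in> carrier R" "snd x' \<in> carrier R" "fst y' \<in> carrier R" "snd y' \<in> carrier R"
    "c \<in> carrier R" "u \<in> carrier R" "d \<in> carrier R" "v \<in> carrier R" "u \<notin> m" "v \<notin> m"
    using assms cu dv by (auto simp: loc_iff)
  have "fst x' \<otimes> fst y' \<otimes> (snd x \<otimes> snd y) \<otimes> (u \<otimes> v) =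
      (fst x' \<otimes> snd x \<otimes> u) \<otimes> (fst y' \<otimes> snd y \<otimes> v)" using C by (simp add: m_ac)
  also have "\<dots> = (fst x \<otimes> c \<otimes> snd x') \<otimes> (fst y \<otimes> d \<otimes> snd y')" by (simp add: E1 E2)
  also have "\<dots> = fst x \<otimes> fst y \<otimes> (c \<otimes> d) \<otimes> (snd x' \<otimes> snd y')" using C by (simp add: m_ac)
  finally have "fst x' \<otimes> fst y' \<otimes> (snd x \<otimes> snd y) \<otimes> (u \<otimes> v) =
      fst x \<otimes> fst y \<otimes> (c \<otimes> d) \<otimes> (snd x' \<otimes> snd y')" .
  moreover have "(c \<otimes> d, u \<otimes> v) \<in> loc R m"
    using C mult_not_in_m by (auto simp: loc_def)
  ultimately show ?thesis unfolding loc_dvd_def loc_mult_def by auto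
qed

lemma one_loc_dvd: "y \<in> loc R m \<Longrightarrow> loc_dvd R m (\<one>, \<one>) y"
  unfolding loc_dvd_def
  by (rule exI[of _ "fst y"], rule exI[of _ "snd y"]) (auto simp: loc_iff)

lemma val_self: "x \<in> loc_nz R m \<Longrightarrow> x \<in> val R m x"
  by (simp add: val_def loc_dvd_refl loc_nz_imp_loc)

lemma val_eq_iff:
  assumes "x \<in> loc_nz R m" "y \<in> loc_nz R m"
  shows "val R m x = val R m y \<longleftrightarrow> loc_dvd R m x y \<and> loc_dvd R m y x"
proof
  assume "val R m x = val R m y"
  then show "loc_dvd R m x y \<and> loc_dvd R m y x"
    using assms val_self[of y] by (auto simp: val_def)
next
  assume "loc_dvd R m x y \<and> loc_dvd R m y x"
  then show "val R m x = val R m y"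
    unfolding val_def using assms loc_dvd_trans loc_nz_imp_loc by blast
qed

lemma val_le_iff:
  assumes x: "x \<in> loc_nz R m" and y: "y \<in> loc_nz R m"
  shows "val_le R m (val R m x) (val R m y) \<longleftrightarrow> loc_dvd R m x y"
proof
  assume "val_le R m (val R m x) (val R m y)"
  then obtain x' y' where "x' \<in> loc_nz R m" "y' \<in> loc_nz R m" "val R m x = val R m x'"
    "val R m y = val R m y'" "loc_dvd R m x' y'" unfolding val_le_def by blast
  then show "loc_dvd R m x y" using x y val_eq_iff loc_dvd_trans loc_nz_imp_loc by meson
qed (use x y in \<open>auto simp: val_le_def\<close>)

lemma val_mult_val:
  assumes x: "x \<in> loc_nz R m" and y: "y \<in> loc_nz R m"
  shows "val_mult R m (val R m x) (val R m y) = val R m (loc_mult R x y)"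
  unfolding val_mult_def
proof (rule the_equality)
  fix C assume "\<exists>x'\<in>loc_nz R m. \<exists>y'\<in>loc_nz R m. val R m x = val R m x' \<and>
    val R m y = val R m y' \<and> C = val R m (loc_mult R x' y')"
  then obtain x' y' where "x' \<in> loc_nz R m" "y' \<in> loc_nz R m" "val R m x = val R m x'"
    "val R m y = val R m y'" "C = val R m (loc_mult R x' y')" by blast
  then show "C = val R m (loc_mult R x y)"
    using x y by (simp add: val_eq_iff loc_mult_nz loc_dvd_loc_mult loc_nz_imp_loc)
qed (use x y in blast)

lemma val_pow_val: "x \<in> loc_nz R m \<Longrightarrow> val_pow R m (val R m x) n = val R m (loc_pow R x n)"
  by (induction n) (auto simp: val_mult_val loc_pow_nz)

lemma val_numerator:
  assumes x: "x \<in> loc_nz R m"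
  shows "val R m x = val R m (fst x, \<one>)"
proof -
  have x1: "(fst x, \<one>) \<in> loc_nz R m" using x by (auto simp: loc_nz_iff one_not_in_m)
  have "loc_dvd R m x (fst x, \<one>)" unfolding loc_dvd_def
    by (rule exI[of _ "snd x"], rule exI[of _ \<one>])
      (use x in \<open>auto simp: loc_nz_iff loc_def one_not_in_m m_ac\<close>)
  moreover have "loc_dvd R m (fst x, \<one>) x" unfolding loc_dvd_def
    by (rule exI[of _ \<one>], rule exI[of _ "snd x"])
      (use x in \<open>auto simp: loc_nz_iff loc_def one_not_in_m m_ac\<close>)
  ultimately show ?thesis using x x1 val_eq_iff by blast
qed

lemma loc_dvd_embedI:
  assumes "a \<in> carrier R" "b \<in> carrier R" "c \<in> carrier R" "u \<in> carrier R" "u \<notin> m"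
    and "b \<otimes> u = a \<otimes> c"
  shows "loc_dvd R m (a, \<one>) (b, \<one>)"
  unfolding loc_dvd_def using assms by (intro exI[of _ c] exI[of _ u]) (simp add: loc_def)

lemma loc_dvd_embed_total:
  assumes "a \<in> carrier R" "b \<in> carrier R"
  shows "loc_dvd R m (a, \<one>) (b, \<one>) \<or> loc_dvd R m (b, \<one>) (a, \<one>)"
  using comparable[OF assms] loc_dvd_embedI assms by meson

lemma loc_dvd_embed_add:
  assumes a: "a \<in> carrier R" and b: "b \<in> carrier R" and ab: "loc_dvd R m (a, \<one>) (b, \<one>)"
  shows "loc_dvd R m (a, \<one>) (a \<oplus> b, \<one>)"
proof -
  obtain c u where cu: "c \<in> carrier R" "u \<in> carrier R" "u \<notin> m" and "b \<otimes> \<one> \<otimes> u = a \<otimes> c \<otimes> \<one>"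
    using ab by (auto simp: loc_dvd_def loc_def)
  then have "b \<otimes> u = a \<otimes> c" using a b by simp
  then have "(a \<oplus> b) \<otimes> u = a \<otimes> (u \<oplus> c)" using a b cu by (simp add: l_distr r_distr)
  then show ?thesis using a b cu by (intro loc_dvd_embedI[of _ _ "u \<oplus> c" u]) auto
qed

lemma loc_dvd_embed_mult:
  assumes a: "a \<in> carrier R" and b: "b \<in> carrier R" and c: "c \<in> carrier R"
    and ab: "loc_dvd R m (a, \<one>) (b, \<one>)"
  shows "loc_dvd R m (a \<otimes> c, \<one>) (b \<otimes> c, \<one>)"
  using loc_dvd_loc_mult[OF _ _ _ _ ab loc_dvd_refl[of "(c, \<one>)"]] a b c
  by (simp add: loc_mult_def loc_iff one_not_in_m)

lemma loc_dvd_zero_embed: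
  assumes b: "b \<in> carrier R" and "loc_dvd R m (\<zero>, \<one>) (b, \<one>)"
  shows "b = \<zero>"
proof -
  obtain c u where "c \<in> carrier R" "u \<in> carrier R" "u \<notin> m" "b \<otimes> \<one> \<otimes> u = \<zero> \<otimes> c \<otimes> \<one>"
    using assms(2) by (auto simp: loc_dvd_def loc_def)
  then show ?thesis using b not_in_m_nonzero integral_iff by auto
qed

subsection \<open>Value sets of prime ideals\<close>

lemma prime_loc_dvd_closed:
  assumes P: "primeideal P R" "P \<subseteq> m" and x: "x \<in> loc R m" and y: "y \<in> loc R m"
    and xy: "loc_dvd R m x y" and xP: "fst x \<in> P"
  shows "fst y \<in> P"
proof -
  interpret P: primeideal P R by (rule P(1))
  obtain c u where cu: "(c, u) \<in> loc R m" and E: "fst y \<otimes> snd x \<otimes> u = fst x \<otimes> c \<otimes> snd y"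
    using xy unfolding loc_dvd_def by blast
  have C: "fst y \<in> carrier R" "snd y \<in> carrier R" "snd x \<in> carrier R" "c \<in> carrier R"
    "u \<in> carrier R" "u \<notin> P" "snd x \<notin> P"
    using x y cu P(2) by (auto simp: loc_iff)
  have "fst x \<otimes> c \<otimes> snd y \<in> P" using C xP P.I_r_closed by simp
  then have "fst y \<otimes> snd x \<otimes> u \<in> P" by (simp add: E)
  then show ?thesis using C P.I_prime by (meson m_closed)
qed

lemma mem_ext_val_iff:
  assumes P: "primeideal P R" "P \<subseteq> m" and x: "x \<in> loc_nz R m"
  shows "val R m x \<in> ext_val R m P \<longleftrightarrow> fst x \<in> P"
proof
  assume "val R m x \<in> ext_val R m P"
  then obtain z where "z \<in> loc_nz R m" "fst z \<in> P" "val R m x = val R m z"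
    unfolding ext_val_def by auto
  then show "fst x \<in> P" using prime_loc_dvd_closed[OF P] x val_eq_iff loc_nz_imp_loc by meson
qed (use x in \<open>auto simp: ext_val_def\<close>)

lemma prime_fst_loc_pow:
  assumes P: "primeideal P R" and x: "x \<in> loc_nz R m" and "n > 0"
    and "fst (loc_pow R x n) \<in> P"
  shows "fst x \<in> P"
  using assms(3,4)
proof (induction n)
  case (Suc n)
  interpret P: primeideal P R by (rule P)
  have "fst x \<otimes> fst (loc_pow R x n) \<in> P" using Suc.prems by (simp add: loc_mult_def)
  then have "fst x \<in> P \<or> fst (loc_pow R x n) \<in> P"
    using P.I_prime x loc_pow_nz[OF x, of n] by (simp add: loc_nz_iff)
  moreover have "\<one> \<notin> P" using P.I_notcarr P.one_imp_carrier by blast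
  ultimately show ?case using Suc.IH by (cases n) auto
qed simp

definition upward_closed :: "('a \<times> 'a) set set \<Rightarrow> bool" where
  "upward_closed T \<longleftrightarrow> (\<forall>x \<in> loc_nz R m. \<forall>y \<in> loc_nz R m.
     loc_dvd R m x y \<longrightarrow> val R m x \<in> T \<longrightarrow> val R m y \<in> T)"

lemma without_right_end_point_iff_upward_closed:
  assumes "T \<subseteq> value_sg R m"
  shows "without_right_end_point R m T \<longleftrightarrow> upward_closed T"
proof
  assume "without_right_end_point R m T"
  then have "y \<in> T" if "x \<in> T" "y \<in> value_sg R m" "val_less R m x y" for x y
    using that unfolding without_right_end_point_def by blast
  then show "upward_closed T"
    unfolding upward_closed_def val_less_def
    by (metis (mono_tags, lifting) image_eqI val_le_iff value_sg_def)
next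
  assume "upward_closed T"
  then have "s \<in> T" if "t \<in> T" "val_le R m t s" for t s
    using that unfolding upward_closed_def val_le_def by blast
  then show "without_right_end_point R m T"
    unfolding without_right_end_point_def is_convex_def val_less_def by blast
qed

lemma ext_val_subsemigroup:
  assumes P: "primeideal P R" "P \<subseteq> m"
  shows "is_subsemigroup R m (ext_val R m P)"
  unfolding is_subsemigroup_def
proof (intro conjI ballI)
  show "ext_val R m P \<subseteq> value_sg R m" by (auto simp: ext_val_def value_sg_def)
next
  interpret P: primeideal P R by (rule P(1))
  fix A B assume "A \<in> ext_val R m P" "B \<in> ext_val R m P"
  then obtain x y where x: "x \<in> loc_nz R m" "fst x \<in> P" "A = val R m x"
    and y: "y \<in> loc_nz R m" "B = val R m y" unfolding ext_val_def by auto
  have "fst (loc_mult R x y) \<in> P"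
    using x y P.I_r_closed by (simp add: loc_mult_def loc_nz_iff)
  then show "val_mult R m A B \<in> ext_val R m P"
    using x y mem_ext_val_iff[OF P loc_mult_nz] val_mult_val by simp
qed

lemma ext_val_proper:
  assumes P: "primeideal P R" "P \<subseteq> m"
  shows "ext_val R m P \<noteq> value_sg R m"
proof
  interpret P: primeideal P R by (rule P(1))
  assume "ext_val R m P = value_sg R m"
  then have "val R m (\<one>, \<one>) \<in> ext_val R m P" using one_loc_nz by (auto simp: value_sg_def)
  then show False
    using mem_ext_val_iff[OF P one_loc_nz] P.I_notcarr P.one_imp_carrier by auto
qed

lemma ext_val_radical:
  assumes P: "primeideal P R" "P \<subseteq> m"
  shows "is_radical R m (ext_val R m P)"
  unfolding is_radical_def
proof (intro ballI allI impI)
  fix A n B assume A: "A \<in> ext_val R m P" and B: "B \<in> value_sg R m" and n: "0 < n"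
    and pow: "val_pow R m B n = A"
  obtain x where x: "x \<in> loc_nz R m" "B = val R m x" using B by (auto simp: value_sg_def)
  have "val R m (loc_pow R x n) \<in> ext_val R m P" using A pow x val_pow_val by simp
  then have "fst (loc_pow R x n) \<in> P" using mem_ext_val_iff[OF P loc_pow_nz[OF x(1)]] by simp
  then show "B \<in> ext_val R m P"
    using prime_fst_loc_pow[OF P(1) x(1) n] mem_ext_val_iff[OF P x(1)] x(2) by simp
qed

lemma ext_val_upward_closed:
  assumes P: "primeideal P R" "P \<subseteq> m"
  shows "upward_closed (ext_val R m P)"
  unfolding upward_closed_def
  using mem_ext_val_iff[OF P] prime_loc_dvd_closed[OF P] loc_nz_imp_loc by meson

lemma inj_on_ext_val: "inj_on (ext_val R m) {P. primeideal P R \<and> P \<subseteq> m}"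
proof -
  have "P \<subseteq> Q" if P: "primeideal P R" "P \<subseteq> m" and Q: "primeideal Q R" "Q \<subseteq> m"
    and eq: "ext_val R m P = ext_val R m Q" for P Q
  proof
    fix p assume p: "p \<in> P"
    interpret P: primeideal P R by (rule P(1))
    interpret Q: primeideal Q R by (rule Q(1))
    show "p \<in> Q"
    proof (cases "p = \<zero>")
      case False
      then have x: "(p, \<one>) \<in> loc_nz R m"
        using p P.a_subset by (auto simp: loc_nz_iff one_not_in_m)
      then show ?thesis using mem_ext_val_iff[OF P x] mem_ext_val_iff[OF Q x] p eq by simp
    qed simp
  qed
  then show ?thesis unfolding inj_on_def by blast
qed

subsection \<open>Recovering a prime ideal from its value set\<close>

definition contraction :: "('a \<times> 'a) set set \<Rightarrow> 'a set" where
  "contraction T = {a \<in> carrier R. a = \<zero> \<or> val R m (a, \<one>) \<in> T}"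

lemma contraction_dvd_closed:
  assumes up: "upward_closed T" and a: "a \<in> contraction T" and b: "b \<in> carrier R"
    and ab: "loc_dvd R m (a, \<one>) (b, \<one>)"
  shows "b \<in> contraction T"
proof (cases "a = \<zero> \<or> b = \<zero>")
  case True
  then show ?thesis using b ab loc_dvd_zero_embed by (auto simp: contraction_def)
next
  case False
  then have "(a, \<one>) \<in> loc_nz R m" "(b, \<one>) \<in> loc_nz R m" "val R m (a, \<one>) \<in> T"
    using a b by (auto simp: loc_nz_iff one_not_in_m contraction_def)
  then show ?thesis using up ab b unfolding upward_closed_def contraction_def by blast
qed

lemma contraction_ideal:
  assumes up: "upward_closed T"
  shows "ideal (contraction T) R"
proof -
  have sub: "contraction T \<subseteq> carrier R" by (auto simp: contraction_def)
  have mult: "x \<otimes> a \<in> contraction T" if "a \<in> contraction T" "x \<in> carrier R" for a x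
  proof -
    have "loc_dvd R m (a, \<one>) (x \<otimes> a, \<one>)"
      using that sub by (intro loc_dvd_embedI[of _ _ x \<one>]) (auto simp: one_not_in_m m_comm)
    then show ?thesis using contraction_dvd_closed[OF up] that sub by blast
  qed
  have add: "a \<oplus> b \<in> contraction T" if "a \<in> contraction T" "b \<in> contraction T" for a b
  proof -
    have c: "a \<in> carrier R" "b \<in> carrier R" using that sub by auto
    from loc_dvd_embed_total[OF c] show ?thesis
      using loc_dvd_embed_add[of a b] loc_dvd_embed_add[of b a] c that a_comm
        contraction_dvd_closed[OF up] by (metis add.m_closed)
  qed
  show ?thesis
  proof (rule idealI[OF ring_axioms])
    show "subgroup (contraction T) (add_monoid R)"
    proof (rule add.subgroupI)
      show "contraction T \<noteq> {}" by (auto simp: contraction_def)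
      show "\<ominus> a \<in> contraction T" if "a \<in> contraction T" for a
        using mult[OF that, of "\<ominus> \<one>"] that sub by (auto simp: l_minus)
    qed (use sub add in auto)
    show "x \<otimes> a \<in> contraction T" if "a \<in> contraction T" "x \<in> carrier R" for a x
      using mult that by blast
    show "a \<otimes> x \<in> contraction T" if "a \<in> contraction T" "x \<in> carrier R" for a x
      using mult[OF that] that sub m_comm by (metis subsetD)
  qed
qed

lemma contraction_prime:
  assumes up: "upward_closed T" and one: "val R m (\<one>, \<one>) \<notin> T" and rad: "is_radical R m T"
  shows "primeideal (contraction T) R"
proof (rule primeidealI[OF contraction_ideal[OF up] is_cring])
  show "carrier R \<noteq> contraction T"
  proof
    assume "carrier R = contraction T"
    then have "\<one> \<in> contraction T" by blast
    then show False using one one_not_zero by (simp add: contraction_def)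
  qed
next
  have sqrt: "x \<in> contraction T" if "x \<otimes> x \<in> contraction T" "x \<in> carrier R" for x
  proof (cases "x = \<zero>")
    case False
    then have x: "(x, \<one>) \<in> loc_nz R m" using that(2) by (simp add: loc_nz_iff one_not_in_m)
    have "val_pow R m (val R m (x, \<one>)) 2 = val R m (x \<otimes> x, \<one>)"
      using val_pow_val[OF x, of 2] that(2) by (simp add: numeral_2_eq_2 loc_mult_def)
    moreover have "val R m (x \<otimes> x, \<one>) \<in> T"
      using that False integral_iff by (auto simp: contraction_def)
    moreover have "val R m (x, \<one>) \<in> value_sg R m" using x by (simp add: value_sg_def)
    ultimately have "val R m (x, \<one>) \<in> T"
      using rad unfolding is_radical_def by (metis zero_less_numeral)
    then show ?thesis using that(2) by (simp add: contraction_def)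
  qed (simp add: contraction_def)
  fix a b assume a: "a \<in> carrier R" and b: "b \<in> carrier R" and ab: "a \<otimes> b \<in> contraction T"
  have "loc_dvd R m (a \<otimes> b, \<one>) (b \<otimes> b, \<one>) \<or> loc_dvd R m (b \<otimes> a, \<one>) (a \<otimes> a, \<one>)"
    using loc_dvd_embed_total[OF a b] loc_dvd_embed_mult a b by blast
  then show "a \<in> contraction T \<or> b \<in> contraction T"
    using contraction_dvd_closed[OF up] ab sqrt a b m_comm by (metis m_closed)
qed

lemma contraction_subset:
  assumes up: "upward_closed T" and one: "val R m (\<one>, \<one>) \<notin> T"
  shows "contraction T \<subseteq> m"
proof
  fix a assume a: "a \<in> contraction T"
  show "a \<in> m"
  proof (rule ccontr)
    assume "a \<notin> m"
    then have "loc_dvd R m (a, \<one>) (\<one>, \<one>)"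
      using a by (intro loc_dvd_embedI[of _ _ \<one> a]) (auto simp: contraction_def)
    then have "\<one> \<in> contraction T" using contraction_dvd_closed[OF up a] by simp
    then show False using one by (simp add: contraction_def)
  qed
qed

lemma ext_val_contraction:
  assumes "T \<subseteq> value_sg R m"
  shows "ext_val R m (contraction T) = T"
proof
  show "ext_val R m (contraction T) \<subseteq> T"
    by (auto simp: ext_val_def contraction_def loc_nz_iff val_numerator)
  show "T \<subseteq> ext_val R m (contraction T)"
  proof
    fix A assume A: "A \<in> T"
    then obtain x where x: "x \<in> loc_nz R m" "A = val R m x"
      using assms by (auto simp: value_sg_def)
    then have "fst x \<in> contraction T"
      using A val_numerator[OF x(1)] by (auto simp: contraction_def loc_nz_iff)
    then show "A \<in> ext_val R m (contraction T)" using x by (auto simp: ext_val_def)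
  qed
qed

lemma one_val_notin_upward_closed:
  assumes "upward_closed T" "T \<subseteq> value_sg R m" "T \<noteq> value_sg R m"
  shows "val R m (\<one>, \<one>) \<notin> T"
  using assms one_loc_nz one_loc_dvd loc_nz_imp_loc
  unfolding upward_closed_def value_sg_def by blast

theorem bij_betw_ext_val:
  "bij_betw (ext_val R m) {P. primeideal P R \<and> P \<subseteq> m}
     {T. is_subsemigroup R m T \<and> T \<noteq> value_sg R m
         \<and> is_radical R m T \<and> without_right_end_point R m T}"
  unfolding bij_betw_def
proof (intro conjI inj_on_ext_val subset_antisym subsetI)
  fix T assume "T \<in> ext_val R m ` {P. primeideal P R \<and> P \<subseteq> m}"
  then obtain P where P: "primeideal P R" "P \<subseteq> m" and T: "T = ext_val R m P" by blast
  have "ext_val R m P \<subseteq> value_sg R m"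
    using ext_val_subsemigroup[OF P] by (simp add: is_subsemigroup_def)
  then show "T \<in> {T. is_subsemigroup R m T \<and> T \<noteq> value_sg R m
         \<and> is_radical R m T \<and> without_right_end_point R m T}"
    using T ext_val_subsemigroup[OF P] ext_val_proper[OF P] ext_val_radical[OF P]
      ext_val_upward_closed[OF P] without_right_end_point_iff_upward_closed by simp
next
  fix T assume "T \<in> {T. is_subsemigroup R m T \<and> T \<noteq> value_sg R m
         \<and> is_radical R m T \<and> without_right_end_point R m T}"
  then have T: "T \<subseteq> value_sg R m" "T \<noteq> value_sg R m" "is_radical R m T" "upward_closed T"
    using without_right_end_point_iff_upward_closed by (auto simp: is_subsemigroup_def)
  then have "val R m (\<one>, \<one>) \<notin> T" using one_val_notin_upward_closed by blast
  then show "T \<in> ext_val R m ` {P. primeideal P R \<and> P \<subseteq> m}"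
    using T contraction_prime contraction_subset ext_val_contraction by blast
qed

end

subsection \<open>The ultrapower\<close>

lemma ZI_cring: "cring (ZI :: ('i \<Rightarrow> int) ring)"
proof (rule cringI)
  show "abelian_group (ZI :: ('i \<Rightarrow> int) ring)"
    by (rule abelian_groupI)
      (auto simp: ZI_def fun_eq_iff algebra_simps intro!: exI[of _ "\<lambda>i. - _ i"])
  show "Group.comm_monoid (ZI :: ('i \<Rightarrow> int) ring)"
    by (rule comm_monoidI) (auto simp: ZI_def fun_eq_iff algebra_simps)
qed (auto simp: ZI_def fun_eq_iff algebra_simps)

lemma ZI_a_inv: "\<ominus>\<^bsub>ZI\<^esub> f = (\<lambda>i. - f i)"
proof -
  interpret cring ZI by (rule ZI_cring)
  show ?thesis by (rule minus_equality) (auto simp: ZI_def)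
qed

lemma null_ideal_prime:
  assumes U: "nonprincipal_ultrafilter U"
  shows "primeideal (null_ideal U) ZI"
proof -
  interpret cring ZI by (rule ZI_cring)
  have UNIV: "UNIV \<in> U" and emp: "{} \<notin> U" and ult: "\<And>A. A \<in> U \<or> - A \<in> U"
    and int: "\<And>A B. A \<in> U \<Longrightarrow> B \<in> U \<Longrightarrow> A \<inter> B \<in> U"
    and mono: "\<And>A B. A \<in> U \<Longrightarrow> A \<subseteq> B \<Longrightarrow> B \<in> U"
    using U unfolding nonprincipal_ultrafilter_def by blast+
  have closed: "f \<in> null_ideal U" if "A \<in> U" "\<And>i. i \<in> A \<Longrightarrow> f i = 0" for A f
    using mono[OF that(1), of "{i. f i = 0}"] that(2) by (auto simp: null_ideal_def)
  have idl: "ideal (null_ideal U) ZI"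
  proof (rule idealI[OF ring_axioms])
    show "subgroup (null_ideal U) (add_monoid ZI)"
    proof (rule add.subgroupI)
      have "(\<lambda>i. 0) \<in> null_ideal U" using UNIV by (simp add: null_ideal_def)
      then show "null_ideal U \<noteq> {}" by blast
      show "\<ominus>\<^bsub>ZI\<^esub> f \<in> null_ideal U" if "f \<in> null_ideal U" for f
        using that unfolding ZI_a_inv by (simp add: null_ideal_def)
      show "f \<oplus>\<^bsub>ZI\<^esub> g \<in> null_ideal U"
        if "f \<in> null_ideal U" "g \<in> null_ideal U" for f g
        using int[OF that[unfolded null_ideal_def mem_Collect_eq]]
        by (rule closed) (simp add: ZI_def)
    qed (simp add: ZI_def)
    show "x \<otimes>\<^bsub>ZI\<^esub> f \<in> null_ideal U" "f \<otimes>\<^bsub>ZI\<^esub> x \<in> null_ideal U"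
      if "f \<in> null_ideal U" for f x
      by (rule closed[OF that[unfolded null_ideal_def mem_Collect_eq]], simp add: ZI_def)+
  qed
  show ?thesis
  proof (rule primeidealI[OF idl ZI_cring])
    have "(\<lambda>i. 1) \<notin> null_ideal U" using emp by (simp add: null_ideal_def)
    then show "carrier ZI \<noteq> null_ideal U" by (auto simp: ZI_def)
  next
    fix f g assume "f \<otimes>\<^bsub>ZI\<^esub> g \<in> null_ideal U"
    then have fg: "{i. f i = 0} \<union> {i. g i = 0} \<in> U"
      by (auto simp: ZI_def null_ideal_def Collect_disj_eq)
    show "f \<in> null_ideal U \<or> g \<in> null_ideal U"
    proof (rule ccontr)
      assume "\<not> ?thesis"
      then have "- {i. f i = 0} \<inter> - {i. g i = 0} \<in> U" using ult int by (auto simp: null_ideal_def)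
      then have "(- {i. f i = 0} \<inter> - {i. g i = 0}) \<inter> ({i. f i = 0} \<union> {i. g i = 0}) \<in> U"
        using int fg by blast
      moreover have "(- {i. f i = 0} \<inter> - {i. g i = 0}) \<inter> ({i. f i = 0} \<union> {i. g i = 0}) = {}"
        by blast
      ultimately show False using emp by simp
    qed
  qed
qed

lemma int_comaximal_cofactors: "\<exists>a' b' u v. (x::int) * b' = y * a' \<and> u * a' + v * b' = 1"
proof (cases "x = 0 \<and> y = 0")
  case True
  then show ?thesis by (intro exI[of _ 1] exI[of _ 0]) simp
next
  case False
  define d where "d = gcd x y"
  have "d \<noteq> 0" using False by (simp add: d_def)
  obtain a' b' where a': "x = d * a'" and b': "y = d * b'" unfolding d_def
    by (meson dvd_def gcd_dvd1 gcd_dvd2)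
  obtain u v where "u * x + v * y = d" unfolding d_def using bezout_int by blast
  then have "d * (u * a' + v * b') = d * 1" using a' b' by (simp add: algebra_simps)
  then have "u * a' + v * b' = 1" using \<open>d \<noteq> 0\<close> by (metis mult_left_cancel)
  moreover have "x * b' = y * a'" using a' b' by simp
  ultimately show ?thesis by blast
qed

lemma ZI_comaximal_cofactors:
  "\<exists>a' b' u v. f \<otimes>\<^bsub>ZI\<^esub> b' = g \<otimes>\<^bsub>ZI\<^esub> a' \<and> u \<otimes>\<^bsub>ZI\<^esub> a' \<oplus>\<^bsub>ZI\<^esub> v \<otimes>\<^bsub>ZI\<^esub> b' = \<one>\<^bsub>ZI\<^esub>"
proof -
  have "\<forall>i. \<exists>t. case t of (a', b', u, v) \<Rightarrow> f i * b' = g i * a' \<and> u * a' + v * b' = 1"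
    using int_comaximal_cofactors by auto
  then obtain t where t: "\<forall>i. case t i of (a', b', u, v) \<Rightarrow> f i * b' = g i * a' \<and> u * a' + v * b' = 1"
    by (rule choice[THEN exE])
  define a' b' u v where "a' i = fst (t i)" and "b' i = fst (snd (t i))"
    and "u i = fst (snd (snd (t i)))" and "v i = snd (snd (snd (t i)))" for i
  have "f i * b' i = g i * a' i \<and> u i * a' i + v i * b' i = 1" for i
    using t[rule_format, of i] by (simp add: a'_def b'_def u_def v_def split: prod.splits)
  then have "f \<otimes>\<^bsub>ZI\<^esub> b' = g \<otimes>\<^bsub>ZI\<^esub> a'" "u \<otimes>\<^bsub>ZI\<^esub> a' \<oplus>\<^bsub>ZI\<^esub> v \<otimes>\<^bsub>ZI\<^esub> b' = \<one>\<^bsub>ZI\<^esub>"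
    by (simp_all add: ZI_def fun_eq_iff)
  then show ?thesis by blast
qed

lemma (in cring) comparable_of_comaximal_cofactors:
  assumes m: "ideal m R" "\<one> \<notin> m"
    and carr: "a \<in> carrier R" "b \<in> carrier R" "a' \<in> carrier R" "b' \<in> carrier R"
      "u \<in> carrier R" "v \<in> carrier R"
    and proportional: "a \<otimes> b' = b \<otimes> a'" and comax: "u \<otimes> a' \<oplus> v \<otimes> b' = \<one>"
  shows "(\<exists>c u. c \<in> carrier R \<and> u \<in> carrier R \<and> u \<notin> m \<and> b \<otimes> u = a \<otimes> c) \<or>
     (\<exists>c u. c \<in> carrier R \<and> u \<in> carrier R \<and> u \<notin> m \<and> a \<otimes> u = b \<otimes> c)"
proof -
  interpret m: ideal m R by (rule m(1))
  have "a' \<notin> m \<or> b' \<notin> m"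
  proof (rule ccontr)
    assume "\<not> ?thesis"
    then have "u \<otimes> a' \<oplus> v \<otimes> b' \<in> m" using carr m.I_l_closed by simp
    then show False using comax m(2) by simp
  qed
  then show ?thesis
  proof
    assume "a' \<notin> m"
    show ?thesis
      by (rule disjI1, rule exI[of _ b'], rule exI[of _ a']) (simp add: carr proportional \<open>a' \<notin> m\<close>)
  next
    assume "b' \<notin> m"
    show ?thesis
      by (rule disjI2, rule exI[of _ a'], rule exI[of _ b']) (simp add: carr proportional \<open>b' \<notin> m\<close>)
  qed
qed

lemma starZ_comaximal_cofactors:
  assumes U: "nonprincipal_ultrafilter U"
    and A: "A \<in> carrier (starZ U)" and B: "B \<in> carrier (starZ U)"
  shows "\<exists>a' b' u v. a' \<in> carrier (starZ U) \<and> b' \<in> carrier (starZ U) \<and>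
    u \<in> carrier (starZ U) \<and> v \<in> carrier (starZ U) \<and>
    A \<otimes>\<^bsub>starZ U\<^esub> b' = B \<otimes>\<^bsub>starZ U\<^esub> a' \<and>
    u \<otimes>\<^bsub>starZ U\<^esub> a' \<oplus>\<^bsub>starZ U\<^esub> v \<otimes>\<^bsub>starZ U\<^esub> b' = \<one>\<^bsub>starZ U\<^esub>"
proof -
  let ?h = "(+>\<^bsub>ZI\<^esub>) (null_ideal U)"
  interpret N: primeideal "null_ideal U" ZI by (rule null_ideal_prime[OF U])
  interpret h: ring_hom_cring ZI "starZ U" ?h
    unfolding starZ_def by (rule N.rcos_ring_hom_cring)
  have ZI_carrier [simp]: "carrier ZI = UNIV" by (simp add: ZI_def)
  have surj: "\<exists>f. X = ?h f" if "X \<in> carrier (starZ U)" for X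
    using that unfolding starZ_def FactRing_def A_RCOSETS_def' by auto
  obtain f g where fg: "A = ?h f" "B = ?h g" using surj A B by blast
  obtain a' b' u v where proportional: "f \<otimes>\<^bsub>ZI\<^esub> b' = g \<otimes>\<^bsub>ZI\<^esub> a'"
    and comax: "u \<otimes>\<^bsub>ZI\<^esub> a' \<oplus>\<^bsub>ZI\<^esub> v \<otimes>\<^bsub>ZI\<^esub> b' = \<one>\<^bsub>ZI\<^esub>"
    using ZI_comaximal_cofactors by blast
  show ?thesis
  proof (intro exI conjI)
    show "?h a' \<in> carrier (starZ U)" "?h b' \<in> carrier (starZ U)"
      "?h u \<in> carrier (starZ U)" "?h v \<in> carrier (starZ U)"
      using h.hom_closed by simp_all
    show "A \<otimes>\<^bsub>starZ U\<^esub> ?h b' = B \<otimes>\<^bsub>starZ U\<^esub> ?h a'"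
      using arg_cong[OF proportional, of ?h] fg by simp
    show "?h u \<otimes>\<^bsub>starZ U\<^esub> ?h a' \<oplus>\<^bsub>starZ U\<^esub> ?h v \<otimes>\<^bsub>starZ U\<^esub> ?h b' = \<one>\<^bsub>starZ U\<^esub>"
      using arg_cong[OF comax, of ?h] by simp
  qed
qed

theorem theorem4p14:
  fixes U :: "'i set set" and m :: "('i \<Rightarrow> int) set set"
  assumes "infinite (UNIV :: 'i set)" and "countable (UNIV :: 'i set)"
    and "nonprincipal_ultrafilter U"
    and "maximalideal m (starZ U)"
  shows "bij_betw (ext_val (starZ U) m)
           {P. primeideal P (starZ U) \<and> P \<subseteq> m}
           {T. is_subsemigroup (starZ U) m T \<and> T \<noteq> value_sg (starZ U) m
               \<and> is_radical (starZ U) m T \<and> without_right_end_point (starZ U) m T}"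
proof -
  interpret N: primeideal "null_ideal U" ZI by (rule null_ideal_prime[OF assms(3)])
  interpret S: domain "starZ U" unfolding starZ_def by (rule N.quotient_is_domain)
  interpret M: maximalideal m "starZ U" by (rule assms(4))
  have one: "\<one>\<^bsub>starZ U\<^esub> \<notin> m" using M.I_notcarr M.one_imp_carrier by blast
  interpret valuation_localization "starZ U" m
  proof (rule valuation_localization.intro[OF S.domain_axioms S.maximalideal_prime[OF assms(4)]])
    show "valuation_localization_axioms (starZ U) m"
    proof
      fix a b assume ab: "a \<in> carrier (starZ U)" "b \<in> carrier (starZ U)"
      then obtain a' b' u v where "a' \<in> carrier (starZ U)" "b' \<in> carrier (starZ U)"
        "u \<in> carrier (starZ U)" "v \<in> carrier (starZ U)"
        "a \<otimes>\<^bsub>starZ U\<^esub> b' = b \<otimes>\<^bsub>starZ U\<^esub> a'"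
        "u \<otimes>\<^bsub>starZ U\<^esub> a' \<oplus>\<^bsub>starZ U\<^esub> v \<otimes>\<^bsub>starZ U\<^esub> b' = \<one>\<^bsub>starZ U\<^esub>"
        using starZ_comaximal_cofactors[OF assms(3) ab] by blast
      with ab show "(\<exists>c u. c \<in> carrier (starZ U) \<and> u \<in> carrier (starZ U) \<and> u \<notin> m
          \<and> b \<otimes>\<^bsub>starZ U\<^esub> u = a \<otimes>\<^bsub>starZ U\<^esub> c) \<or>
        (\<exists>c u. c \<in> carrier (starZ U) \<and> u \<in> carrier (starZ U) \<and> u \<notin> m
          \<and> a \<otimes>\<^bsub>starZ U\<^esub> u = b \<otimes>\<^bsub>starZ U\<^esub> c)"
        by (rule S.comparable_of_comaximal_cofactors[OF M.is_ideal one])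
    qed
  qed
  show ?thesis by (rule bij_betw_ext_val)
qed

end
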